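(* Let $m\ge2$ and $G=CK(2m-1)$. Every set of edges $B\subset E(G)$ of Class A is a blocker for the simple Hamiltonian paths of $G$.
   Context: $CK(2m-1)$ is the complete convex geometric graph on $2m-1$ points in convex position, labelled clockwise $0,\dots,2m-2$ (elements of $\mathbb{Z}_{2m-1}$; indices mod $2m-1$), with all segments as edges. A simple Hamiltonian path (SHP) is a path through all vertices whose edges pairwise do not cross; a blocker for SHPs is an edge set of smallest possible size (which is $m$) sharing an edge with every SHP. Class A (up to cyclic rotation $x\mapsto x+k$ of labels): sets consisting of the following edges, for integers $\alpha,\delta\ge0$ with $\alpha+\delta\le m-2$: (1) all edges of the boundary path $\langle\alpha,\alpha+1,\dots,m-\delta\rangle$; (2) the edges $[i-1-\epsilon_i,\,i+\epsilon_i]$, $1\le i\le\alpha$, with $\epsilon_1>\dots>\epsilon_\alpha>0$ and $\alpha-i+1\le\epsilon_i\le m-\delta-i-1$; (3) the edges $[m-j-\xi_j,\,m-j+1+\xi_j]$, $1\le j\le\delta$, with $\xi_1>\dots>\xi_\delta>0$ and $\delta+1-j\le\xi_j\le m-j-\alpha-1$; and in addition $\epsilon_1+\xi_1\le m-2$ (when $\alpha,\delta>0$). *)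

theory Defs
  imports Main
begin

text \<open>Vertices of CK(n) are 0..n-1 (clockwise); an edge is a 2-element vertex set.\<close>

definition ck_edges :: "nat \<Rightarrow> nat set set" where
  "ck_edges n = {{a, b} | a b. a < n \<and> b < n \<and> a \<noteq> b}"

text \<open>Two segments of points in convex position cross iff their endpoints interleave.\<close>
definition crosses :: "nat set \<Rightarrow> nat set \<Rightarrow> bool" where
  "crosses e f \<longleftrightarrow> (\<exists>a b c d. {e, f} = {{a, b}, {c, d}} \<and> a < c \<and> c < b \<and> b < d)"

definition path_edges :: "nat list \<Rightarrow> nat set set" where
  "path_edges p = {{p ! i, p ! Suc i} | i. Suc i < length p}"

definition is_SHP :: "nat \<Rightarrow> nat list \<Rightarrow> bool" where
  "is_SHP n p \<longleftrightarrow> distinct p \<and> set p = {0..<n} \<and>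
     (\<forall>e \<in> path_edges p. \<forall>f \<in> path_edges p. \<not> crosses e f)"

definition hits_all_SHP :: "nat \<Rightarrow> nat set set \<Rightarrow> bool" where
  "hits_all_SHP n B \<longleftrightarrow> (\<forall>p. is_SHP n p \<longrightarrow> B \<inter> path_edges p \<noteq> {})"

definition SHP_blocker :: "nat \<Rightarrow> nat set set \<Rightarrow> bool" where
  "SHP_blocker n B \<longleftrightarrow> B \<subseteq> ck_edges n \<and> hits_all_SHP n B \<and>
     (\<forall>B'. B' \<subseteq> ck_edges n \<and> hits_all_SHP n B' \<longrightarrow> card B \<le> card B')"

definition redge :: "nat \<Rightarrow> int \<Rightarrow> int \<Rightarrow> int \<Rightarrow> nat set" where
  "redge n k x y = {nat ((x + k) mod int n), nat ((y + k) mod int n)}"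

definition classA :: "nat \<Rightarrow> nat set set \<Rightarrow> bool" where
  "classA m B \<longleftrightarrow> (\<exists>(k::int) (\<alpha>::nat) (\<delta>::nat) (\<epsilon>::nat \<Rightarrow> int) (\<xi>::nat \<Rightarrow> int).
     let n = 2 * m - 1; M = int m; a = int \<alpha>; d = int \<delta> in
     a + d \<le> M - 2 \<and>
     (\<forall>i j. 1 \<le> i \<and> i < j \<and> j \<le> \<alpha> \<longrightarrow> \<epsilon> j < \<epsilon> i) \<and>
     (\<forall>i. 1 \<le> i \<and> i \<le> \<alpha> \<longrightarrow> 0 < \<epsilon> i \<and> a - int i + 1 \<le> \<epsilon> i \<and> \<epsilon> i \<le> M - d - int i - 1) \<and>
     (\<forall>i j. 1 \<le> i \<and> i < j \<and> j \<le> \<delta> \<longrightarrow> \<xi> j < \<xi> i) \<and>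
     (\<forall>j. 1 \<le> j \<and> j \<le> \<delta> \<longrightarrow> 0 < \<xi> j \<and> d + 1 - int j \<le> \<xi> j \<and> \<xi> j \<le> M - int j - a - 1) \<and>
     (0 < \<alpha> \<and> 0 < \<delta> \<longrightarrow> \<epsilon> 1 + \<xi> 1 \<le> M - 2) \<and>
     B = {redge n k i (i + 1) | i. a \<le> i \<and> i < M - d}
       \<union> {redge n k (int i - 1 - \<epsilon> i) (int i + \<epsilon> i) | i. 1 \<le> i \<and> i \<le> \<alpha>}
       \<union> {redge n k (M - int j - \<xi> j) (M - int j + 1 + \<xi> j) | j. 1 \<le> j \<and> j \<le> \<delta>})"

end

theory Submission
  imports Defs
begin

(*
  Since the points are in convex position, the first k + 1 vertices of a simple
  Hamiltonian path always occupy a cyclic interval of labels, and each further vertex extends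
  this interval at one end. Lifting labels to the integers, a path becomes a walk of intervals
  [A k, B k] with B k - A k = k, whose k-th vertex is an endpoint of the k-th interval.

  Suppose such a walk avoids a Class A set. After translating by a multiple of n = 2m - 1 and
  possibly reflecting (which exchanges the roles of alpha, epsilon and delta, xi), it avoids the
  boundary path only if its right end wraps around past n + m - delta - 1. The first-visit
  times T y of the vertices n + y, for alpha < y < m - delta, then increase by at least 2 per
  step, and avoiding the chord at i + epsilon_i (resp. m - j - xi_j) forbids two consecutive
  values of T there. This pushes T (m - delta - 1) beyond the n - 3 steps available.

  Minimality: every edge lies on at most two of the n zigzag paths k, k + 1, k - 1, k + 2, ...,
  so a set meeting all of them has at least m edges.
*)


section \<open>Crossing chords\<close>

lemma crosses_sym: "crosses e f \<longleftrightarrow> crosses f e"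
  unfolding crosses_def by (metis insert_commute)

lemma crosses_cases:
  assumes "crosses {x, y} {u, w}"
  obtains a b c d where "{x, y} = {a, b} \<and> {u, w} = {c, d} \<or> {x, y} = {c, d} \<and> {u, w} = {a, b}"
    and "a < c" "c < b" "b < d"
proof -
  obtain a b c d where h: "{{x, y}, {u, w}} = {{a, b}, {c, d}}" "a < c" "c < b" "b < d"
    using assms unfolding crosses_def by blast
  have "{a, b} \<noteq> {c, d}" using h(2-4) by (auto simp: doubleton_eq_iff)
  with h(1) have "{x, y} = {a, b} \<and> {u, w} = {c, d} \<or> {x, y} = {c, d} \<and> {u, w} = {a, b}"
    by (metis doubleton_eq_iff)
  with h(2-4) that show thesis by blast
qed

lemma crosses_imp_distinct:
  assumes "crosses {x, y} {u, w}"
  shows "x \<noteq> y \<and> u \<noteq> w \<and> u \<notin> {x, y} \<and> w \<notin> {x, y}"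
  using assms by (rule crosses_cases) (auto simp: doubleton_eq_iff)

lemma crosses_ordered_iff:
  assumes "x < y" "u < w" "u \<notin> {x, y}" "w \<notin> {x, y}"
  shows "crosses {x, y} {u, w} \<longleftrightarrow> (x < u \<and> u < y) \<noteq> (x < w \<and> w < y)"
proof
  assume "crosses {x, y} {u, w}"
  then show "(x < u \<and> u < y) \<noteq> (x < w \<and> w < y)"
    by (rule crosses_cases) (use assms in \<open>auto simp: doubleton_eq_iff\<close>)
next
  assume sep: "(x < u \<and> u < y) \<noteq> (x < w \<and> w < y)"
  show "crosses {x, y} {u, w}"
  proof (cases "x < u \<and> u < y")
    case True
    with sep assms have "y < w" by auto
    with True show ?thesis unfolding crosses_def by blast
  next
    case False
    with sep assms have "u < x" "x < w" "w < y" by auto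
    then have "{{x, y}, {u, w}} = {{u, w}, {x, y}} \<and> u < x \<and> x < w \<and> w < y" by auto
    then show ?thesis unfolding crosses_def by blast
  qed
qed

lemma crosses_iff_separates:
  assumes "x \<noteq> y" "u \<noteq> w" "u \<notin> {x, y}" "w \<notin> {x, y}"
  shows "crosses {x, y} {u, w} \<longleftrightarrow>
    (min x y < u \<and> u < max x y) \<noteq> (min x y < w \<and> w < max x y)"
proof -
  have "{x, y} = {min x y, max x y}" "{u, w} = {min u w, max u w}" by (auto simp: min_def max_def)
  moreover have "crosses {min x y, max x y} {min u w, max u w} \<longleftrightarrow>
      (min x y < min u w \<and> min u w < max x y) \<noteq> (min x y < max u w \<and> max u w < max x y)"
    by (rule crosses_ordered_iff) (use assms in \<open>auto simp: min_def max_def\<close>)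
  ultimately show ?thesis by (auto simp: min_def max_def)
qed

definition vert :: "nat \<Rightarrow> int \<Rightarrow> nat" where
  "vert n z = nat (z mod int n)"

text \<open>Unlike \<open>crosses\<close>, cyclic betweenness is visibly invariant under rotating the labels.\<close>

definition cyc_between :: "nat \<Rightarrow> int \<Rightarrow> int \<Rightarrow> int \<Rightarrow> bool" where
  "cyc_between n x y z \<longleftrightarrow> (z - x) mod int n < (y - x) mod int n"

lemma int_vert: "0 < n \<Longrightarrow> int (vert n z) = z mod int n"
  unfolding vert_def by simp

lemma vert_less: "0 < n \<Longrightarrow> vert n z < n"
  unfolding vert_def by (simp add: nat_less_iff)

lemma vert_int: "x < n \<Longrightarrow> vert n (int x) = x"
  unfolding vert_def by simp

lemma vert_add_mult: "vert n (z + int n * q) = vert n z"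
  unfolding vert_def by simp

lemma vert_eq_iff: "0 < n \<Longrightarrow> vert n s = vert n t \<longleftrightarrow> s mod int n = t mod int n"
  unfolding vert_def by (simp add: eq_nat_nat_iff)

lemma vert_inj_window:
  assumes "w \<le> s" "s < w + int n" "w \<le> t" "t < w + int n" "vert n s = vert n t"
  shows "s = t"
proof -
  have "s mod int n = t mod int n" using assms by (simp add: vert_eq_iff)
  then have "(s - w) mod int n = (t - w) mod int n" by (rule mod_diff_cong) simp
  with assms show ?thesis by simp
qed

lemma inj_on_vert_window: "inj_on (vert n) {w..<w + int n}"
  by (rule inj_onI) (auto intro: vert_inj_window)

lemma distinct_vert_window: "distinct ps \<Longrightarrow> set ps \<subseteq> {w..<w + int n} \<Longrightarrow> distinct (map (vert n) ps)"
  by (simp add: distinct_map inj_on_subset[OF inj_on_vert_window])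

lemma cyc_between_nat:
  assumes "a < n" "b < n" "c < n" "a \<noteq> b" "c \<noteq> a" "c \<noteq> b"
  shows "cyc_between n (int a) (int b) (int c) \<longleftrightarrow> (a < b \<longleftrightarrow> min a b < c \<and> c < max a b)"
proof -
  have md: "(int s - int a) mod int n = (if a \<le> s then int s - int a else int s - int a + int n)"
    if "s < n" for s
  proof (cases "a \<le> s")
    case False
    have "(int s - int a) mod int n = (int s - int a + int n) mod int n" by simp
    also have "\<dots> = int s - int a + int n" using False assms by (intro mod_pos_pos_trivial) auto
    finally show ?thesis using False by simp
  qed (use that in simp)
  show ?thesis
    unfolding cyc_between_def md[OF assms(2)] md[OF assms(3)] using assms by (auto simp: min_def max_def)
qed

lemma crosses_vert_iff:
  assumes "0 < n" and "distinct [vert n x, vert n y, vert n u, vert n w]"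
  shows "crosses {vert n x, vert n y} {vert n u, vert n w} \<longleftrightarrow>
    cyc_between n x y u \<noteq> cyc_between n x y w"
proof -
  let ?a = "vert n x" and ?b = "vert n y"
  have inside: "cyc_between n x y z \<longleftrightarrow> (?a < ?b \<longleftrightarrow> min ?a ?b < vert n z \<and> vert n z < max ?a ?b)"
    if "vert n z \<noteq> ?a" "vert n z \<noteq> ?b" for z
  proof -
    have "cyc_between n x y z = cyc_between n (int ?a) (int ?b) (int (vert n z))"
      unfolding cyc_between_def int_vert[OF assms(1)] by (simp add: mod_diff_eq)
    also have "\<dots> \<longleftrightarrow> (?a < ?b \<longleftrightarrow> min ?a ?b < vert n z \<and> vert n z < max ?a ?b)"
      by (rule cyc_between_nat) (use assms that in \<open>auto simp: vert_less\<close>)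
    finally show ?thesis .
  qed
  have "crosses {?a, ?b} {vert n u, vert n w} \<longleftrightarrow>
      (min ?a ?b < vert n u \<and> vert n u < max ?a ?b) \<noteq> (min ?a ?b < vert n w \<and> vert n w < max ?a ?b)"
    by (rule crosses_iff_separates) (use assms in auto)
  with inside[of u] inside[of w] assms(2) show ?thesis by auto
qed

lemma crosses_vert_interleaved:
  assumes "p1 < p2" "p2 < p3" "p3 < p4" "p4 < p1 + int n"
  shows "crosses {vert n p1, vert n p3} {vert n p2, vert n p4}"
proof -
  have "distinct (map (vert n) [p1, p3, p2, p4])"
    by (rule distinct_vert_window[where w = p1]) (use assms in auto)
  moreover have "cyc_between n p1 p3 p2" "\<not> cyc_between n p1 p3 p4"
    unfolding cyc_between_def using assms by simp_all
  ultimately show ?thesis using assms by (subst crosses_vert_iff) auto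
qed

lemma not_crosses_vert_nested:
  assumes "p1 \<le> p2" "p2 < p3" "p3 \<le> p4" "p4 < p1 + int n"
  shows "\<not> crosses {vert n p1, vert n p4} {vert n p2, vert n p3}"
proof (cases "p1 = p2 \<or> p3 = p4")
  case True
  then show ?thesis using crosses_imp_distinct by blast
next
  case False
  have "distinct (map (vert n) [p1, p4, p2, p3])"
    by (rule distinct_vert_window[where w = p1]) (use assms False in auto)
  moreover have "cyc_between n p1 p4 p2" "cyc_between n p1 p4 p3"
    unfolding cyc_between_def using assms False by simp_all
  ultimately show ?thesis using assms by (subst crosses_vert_iff) auto
qed


lemma crosses_arc_exit:
  assumes "a \<le> b" "b + 1 < z" "z < a + int n - 1" "c \<in> {vert n a, vert n b}"
  shows "crosses {c, vert n z} {vert n (b + 1), vert n (a - 1)}"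
proof -
  have wrap: "vert n (a + int n - 1) = vert n (a - 1)" "vert n (a + int n) = vert n a"
    using vert_add_mult[of n "a - 1" 1] vert_add_mult[of n a 1] by (simp_all add: algebra_simps)
  from assms(4) consider "c = vert n a" | "c = vert n b" by blast
  then show ?thesis
  proof cases
    case 1
    have "crosses {vert n (b + 1), vert n (a + int n - 1)} {vert n z, vert n (a + int n)}"
      by (rule crosses_vert_interleaved) (use assms in auto)
    then show ?thesis using 1 wrap crosses_sym by (simp add: insert_commute)
  next
    case 2
    have "crosses {vert n b, vert n z} {vert n (b + 1), vert n (a + int n - 1)}"
      by (rule crosses_vert_interleaved) (use assms in auto)
    then show ?thesis using 2 wrap by simp
  qed
qed


section \<open>Prefixes of simple Hamiltonian paths are arcs\<close>

lemma vert_window_representative: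
  assumes "v < n"
  obtains z where "w \<le> z" "z < w + int n" "vert n z = v"
proof
  show "w \<le> w + (int v - w) mod int n" "w + (int v - w) mod int n < w + int n"
    using assms by simp_all
  have "(w + (int v - w) mod int n) mod int n = int v"
    using assms by (simp add: mod_add_right_eq)
  then show "vert n (w + (int v - w) mod int n) = v" unfolding vert_def by simp
qed

lemma is_SHP_D:
  assumes "is_SHP n p"
  shows "distinct p" "length p = n" "set p = {0..<n}"
    "\<And>e f. e \<in> path_edges p \<Longrightarrow> f \<in> path_edges p \<Longrightarrow> \<not> crosses e f"
  using assms distinct_card[of p] unfolding is_SHP_def by auto

lemma path_edgesI: "Suc i < length p \<Longrightarrow> {p ! i, p ! Suc i} \<in> path_edges p"
  unfolding path_edges_def by blast

lemma path_edgesE: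
  assumes "e \<in> path_edges p"
  obtains i where "e = {p ! i, p ! Suc i}" "Suc i < length p"
  using assms unfolding path_edges_def by blast

lemma SHP_nth_less: "is_SHP n p \<Longrightarrow> i < n \<Longrightarrow> p ! i < n"
  using is_SHP_D(2,3) nth_mem by fastforce

lemma SHP_nth_eq_iff: "is_SHP n p \<Longrightarrow> i < n \<Longrightarrow> j < n \<Longrightarrow> p ! i = p ! j \<longleftrightarrow> i = j"
  using is_SHP_D(1,2) nth_eq_iff_index_eq by metis

lemma SHP_side_constant:
  assumes shp: "is_SHP n p" and "Suc k < i" "i \<le> j" "j < n"
  shows "(min (p!k) (p!Suc k) < p!j \<and> p!j < max (p!k) (p!Suc k)) \<longleftrightarrow>
         (min (p!k) (p!Suc k) < p!i \<and> p!i < max (p!k) (p!Suc k))"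
  using assms(3,4)
proof (induction j rule: dec_induct)
  case (step j)
  let ?inside = "\<lambda>z. min (p!k) (p!Suc k) < z \<and> z < max (p!k) (p!Suc k)"
  have "{p!k, p!Suc k} \<in> path_edges p" "{p!j, p!Suc j} \<in> path_edges p"
    using is_SHP_D(2)[OF shp] path_edgesI step assms(2) by auto
  then have "\<not> crosses {p!k, p!Suc k} {p!j, p!Suc j}" using is_SHP_D(4)[OF shp] by blast
  moreover have "crosses {p!k, p!Suc k} {p!j, p!Suc j} \<longleftrightarrow> ?inside (p!j) \<noteq> ?inside (p!Suc j)"
    by (rule crosses_iff_separates) (use SHP_nth_eq_iff[OF shp] step assms(2) in auto)
  ultimately show ?case using step by simp
qed simp

lemma SHP_later_not_crosses:
  assumes shp: "is_SHP n p" and "Suc k < i" "i < n" "Suc k < j" "j < n"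
  shows "\<not> crosses {p!k, p!Suc k} {p!i, p!j}"
proof
  assume c: "crosses {p!k, p!Suc k} {p!i, p!j}"
  have "(min (p!k) (p!Suc k) < p!i \<and> p!i < max (p!k) (p!Suc k)) \<longleftrightarrow>
        (min (p!k) (p!Suc k) < p!j \<and> p!j < max (p!k) (p!Suc k))"
  proof (cases "i \<le> j")
    case True
    then show ?thesis using SHP_side_constant[OF shp assms(2) True assms(5)] by simp
  next
    case False
    then show ?thesis using SHP_side_constant[OF shp assms(4) _ assms(3)] by simp
  qed
  moreover have "crosses {p!k, p!Suc k} {p!i, p!j} \<longleftrightarrow>
      (min (p!k) (p!Suc k) < p!i \<and> p!i < max (p!k) (p!Suc k)) \<noteq>
      (min (p!k) (p!Suc k) < p!j \<and> p!j < max (p!k) (p!Suc k))"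
    by (rule crosses_iff_separates) (use crosses_imp_distinct[OF c] in auto)
  ultimately show False using c by simp
qed

lemma SHP_index_after:
  assumes shp: "is_SHP n p" and "v < n" "v \<notin> set (take m p)"
  obtains i where "m \<le> i" "i < n" "p ! i = v"
proof -
  obtain i where i: "i < n" "p ! i = v"
    using is_SHP_D(2,3)[OF shp] assms(2) by (metis atLeastLessThan_iff in_set_conv_nth zero_le)
  have "\<not> i < m" using nth_mem[of i "take m p"] i is_SHP_D(2)[OF shp] assms(3) by auto
  with i show thesis by (intro that[of i]) auto
qed

text \<open>If the next vertex did not extend the arc \<open>[a, b]\<close>, the edge to it would separate the
  neighbours \<open>b + 1\<close> and \<open>a - 1\<close> of the arc, which are both still to be visited.\<close>

lemma SHP_next_extends_arc:
  assumes shp: "is_SHP n p" and k: "Suc k < n" and len: "b - a = int k"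
    and prefix: "set (take (Suc k) p) = vert n ` {a..b}"
    and last: "p ! k \<in> {vert n a, vert n b}"
  shows "p ! Suc k \<in> {vert n (b + 1), vert n (a - 1)}"
proof (rule ccontr)
  assume not_end: "p ! Suc k \<notin> {vert n (b + 1), vert n (a - 1)}"
  let ?y = "p ! Suc k"
  have n: "0 < n" using k by simp
  have take_next: "take (Suc (Suc k)) p = take (Suc k) p @ [?y]"
    using take_Suc_conv_app_nth[of "Suc k" p] is_SHP_D(2)[OF shp] k by simp
  then have "?y \<notin> set (take (Suc k) p)"
    using distinct_take[of p "Suc (Suc k)"] is_SHP_D(1)[OF shp] by simp
  then have y_new: "?y \<notin> vert n ` {a..b}" using prefix by simp
  obtain z where z: "a \<le> z" "z < a + int n" "vert n z = ?y"
    using vert_window_representative SHP_nth_less[OF shp k] by metis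
  have wrap: "vert n (a + int n - 1) = vert n (a - 1)"
    using vert_add_mult[of n "a - 1" 1] by (simp add: algebra_simps)
  have "z \<notin> {a..b}" using y_new z(3) by force
  moreover have "z \<noteq> b + 1" "z \<noteq> a + int n - 1" using not_end z(3) wrap by auto
  ultimately have z_inner: "b + 1 < z" "z < a + int n - 1" using z(1,2) by auto
  have "int (Suc k) < int n" using k by (simp only: of_nat_less_iff)
  then have room: "b + 1 < a + int n" using len by simp
  have visited: "set (take (Suc (Suc k)) p) = vert n ` insert z {a..b}"
    using prefix take_next z(3) by auto
  have window: "insert z {a..b} \<subseteq> {a..<a + int n}" using z room by auto
  have unvisited: "vert n x \<notin> set (take (Suc (Suc k)) p)" if "x \<in> {b + 1, a + int n - 1}" for x
  proof -
    have "x \<in> {a..<a + int n}" "x \<notin> insert z {a..b}" using that z_inner room len n by auto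
    then show ?thesis unfolding visited using inj_on_image_mem_iff[OF inj_on_vert_window _ window] by blast
  qed
  obtain i where "Suc (Suc k) \<le> i" "i < n" "p ! i = vert n (b + 1)"
    using SHP_index_after[OF shp vert_less[OF n] unvisited] by blast
  moreover obtain j where "Suc (Suc k) \<le> j" "j < n" "p ! j = vert n (a - 1)"
    using SHP_index_after[OF shp vert_less[OF n] unvisited] wrap by (metis insertCI)
  ultimately have "\<not> crosses {p ! k, ?y} {vert n (b + 1), vert n (a - 1)}"
    using SHP_later_not_crosses[OF shp] by (metis Suc_le_eq)
  moreover have "crosses {p ! k, ?y} {vert n (b + 1), vert n (a - 1)}"
    using crosses_arc_exit[OF _ z_inner last] len z(3) by simp
  ultimately show False by contradiction
qed

fun prefix_arc :: "nat \<Rightarrow> nat list \<Rightarrow> nat \<Rightarrow> int \<times> int" where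
  "prefix_arc n p 0 = (int (p ! 0), int (p ! 0))"
| "prefix_arc n p (Suc k) = (let (a, b) = prefix_arc n p k in
     if p ! Suc k = vert n (b + 1) then (a, b + 1) else (a - 1, b))"

lemma prefix_arc_inv:
  assumes shp: "is_SHP n p" and "k < n" and "prefix_arc n p k = (a, b)"
  shows "b - a = int k \<and> set (take (Suc k) p) = vert n ` {a..b} \<and> p ! k \<in> {vert n a, vert n b}"
  using assms(2,3)
proof (induction k arbitrary: a b)
  case 0
  then show ?case using SHP_nth_less[OF shp, of 0] is_SHP_D(2)[OF shp]
    by (auto simp: take_Suc_conv_app_nth vert_int)
next
  case (Suc k)
  obtain a' b' where ab': "prefix_arc n p k = (a', b')" by fastforce
  with Suc have IH: "b' - a' = int k" "set (take (Suc k) p) = vert n ` {a'..b'}"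
    "p ! k \<in> {vert n a', vert n b'}" by auto
  have next_vert: "p ! Suc k \<in> {vert n (b' + 1), vert n (a' - 1)}"
    by (rule SHP_next_extends_arc[OF shp Suc.prems(1) IH])
  have "set (take (Suc (Suc k)) p) = insert (p ! Suc k) (vert n ` {a'..b'})"
    using IH(2) Suc.prems is_SHP_D(2)[OF shp] by (simp add: take_Suc_conv_app_nth[of "Suc k"])
  moreover have "{a'..b' + 1} = insert (b' + 1) {a'..b'}" "{a' - 1..b'} = insert (a' - 1) {a'..b'}"
    using IH(1) by auto
  ultimately show ?case using Suc.prems(2) ab' IH(1) next_vert by (auto split: if_splits)
qed

text \<open>The residues of \<open>A k, \<dots>, B k\<close> are the first \<open>k + 1\<close> vertices of a path, and \<open>D k\<close> says
  that its \<open>k\<close>-th vertex extends this interval to the right; \<open>walk_vertex\<close> is the integer lift of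
  the \<open>k\<close>-th vertex.\<close>

definition arc_walk :: "nat \<Rightarrow> (nat \<Rightarrow> int) \<Rightarrow> (nat \<Rightarrow> int) \<Rightarrow> (nat \<Rightarrow> bool) \<Rightarrow> bool" where
  "arc_walk n A B D \<longleftrightarrow> A 0 = B 0 \<and> (\<forall>k. 0 < k \<and> k < n \<longrightarrow>
     (D k \<longrightarrow> A k = A (k - 1) \<and> B k = B (k - 1) + 1) \<and>
     (\<not> D k \<longrightarrow> A k = A (k - 1) - 1 \<and> B k = B (k - 1)))"

definition walk_vertex :: "(nat \<Rightarrow> int) \<Rightarrow> (nat \<Rightarrow> int) \<Rightarrow> (nat \<Rightarrow> bool) \<Rightarrow> nat \<Rightarrow> int" where
  "walk_vertex A B D k = (if k = 0 then A 0 else if D k then B k else A k)"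

lemma SHP_arc_walk:
  assumes shp: "is_SHP n p"
  obtains A B D where "arc_walk n A B D" "\<And>k. k < n \<Longrightarrow> p ! k = vert n (walk_vertex A B D k)"
proof
  define A where "A k = fst (prefix_arc n p k)" for k
  define B where "B k = snd (prefix_arc n p k)" for k
  define D where "D k \<longleftrightarrow> p ! k = vert n (B (k - 1) + 1)" for k
  have arc_Suc: "prefix_arc n p (Suc k) = (if D (Suc k) then (A k, B k + 1) else (A k - 1, B k))" for k
    by (simp add: A_def B_def D_def split_beta)
  have "(D k \<longrightarrow> A k = A (k - 1) \<and> B k = B (k - 1) + 1) \<and>
      (\<not> D k \<longrightarrow> A k = A (k - 1) - 1 \<and> B k = B (k - 1))" if "0 < k" for k
  proof -
    obtain j where "k = Suc j" using \<open>0 < k\<close> gr0_implies_Suc by blast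
    then show ?thesis using arc_Suc[of j] by (simp add: A_def B_def)
  qed
  then show "arc_walk n A B D" unfolding arc_walk_def by (simp add: A_def B_def)
  fix k assume "k < n"
  show "p ! k = vert n (walk_vertex A B D k)"
  proof (cases k)
    case 0
    then show ?thesis using SHP_nth_less[OF shp \<open>k < n\<close>] by (simp add: walk_vertex_def A_def vert_int)
  next
    case (Suc j)
    have "p ! Suc j \<in> {vert n (B j + 1), vert n (A j - 1)}"
      by (rule SHP_next_extends_arc[OF shp])
        (use prefix_arc_inv[OF shp, of j "A j" "B j"] \<open>k < n\<close> Suc in \<open>auto simp: A_def B_def\<close>)
    then show ?thesis using arc_Suc[of j] Suc
      by (auto simp: walk_vertex_def A_def B_def D_def)
  qed
qed

lemma arc_walk_step:
  assumes "arc_walk n A B D" "0 < k" "k < n"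
  shows "D k \<Longrightarrow> A k = A (k - 1) \<and> B k = B (k - 1) + 1"
    and "\<not> D k \<Longrightarrow> A k = A (k - 1) - 1 \<and> B k = B (k - 1)"
  using assms unfolding arc_walk_def by blast+

lemma arc_walk_start: "arc_walk n A B D \<Longrightarrow> A 0 = B 0"
  unfolding arc_walk_def by blast

lemma arc_walk_width:
  assumes "arc_walk n A B D" "k < n"
  shows "B k - A k = int k"
  using assms(2)
proof (induction k)
  case (Suc k)
  then show ?case using arc_walk_step[OF assms(1), of "Suc k"] by (cases "D (Suc k)") auto
qed (use arc_walk_start[OF assms(1)] in simp)

lemma arc_walk_right_mono:
  assumes "arc_walk n A B D" "k \<le> k'" "k' < n"
  shows "B k \<le> B k'"
  using assms(2,3)
proof (induction k' rule: dec_induct)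
  case (step j)
  then show ?case using arc_walk_step[OF assms(1), of "Suc j"] by (cases "D (Suc j)") auto
qed simp

lemma arc_walk_shift: "arc_walk n A B D \<Longrightarrow> arc_walk n (\<lambda>k. A k + c) (\<lambda>k. B k + c) D"
  unfolding arc_walk_def by auto

lemma walk_vertex_shift: "walk_vertex (\<lambda>k. A k + c) (\<lambda>k. B k + c) D = (\<lambda>k. walk_vertex A B D k + c)"
  unfolding walk_vertex_def by auto

lemma arc_walk_reflect: "arc_walk n A B D \<Longrightarrow> arc_walk n (\<lambda>k. c - B k) (\<lambda>k. c - A k) (\<lambda>k. \<not> D k)"
  unfolding arc_walk_def by auto

lemma walk_vertex_reflect:
  "A 0 = B 0 \<Longrightarrow> walk_vertex (\<lambda>k. c - B k) (\<lambda>k. c - A k) (\<lambda>k. \<not> D k) = (\<lambda>k. c - walk_vertex A B D k)"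
  unfolding walk_vertex_def by auto

definition walk_hits :: "nat \<Rightarrow> (int \<times> int) set \<Rightarrow> (nat \<Rightarrow> int) \<Rightarrow> bool" where
  "walk_hits n P V \<longleftrightarrow> (\<exists>k x y. 0 < k \<and> k < n \<and> (x, y) \<in> P \<and>
     (V (k - 1) mod int n = x mod int n \<and> V k mod int n = y mod int n \<or>
      V (k - 1) mod int n = y mod int n \<and> V k mod int n = x mod int n))"

lemma walk_hitsI:
  assumes "0 < k" "k < n" "(x, y) \<in> P"
    and "V (k - 1) = x + int n * q1 \<and> V k = y + int n * q2 \<or> V (k - 1) = y + int n * q1 \<and> V k = x + int n * q2"
  shows "walk_hits n P V"
  unfolding walk_hits_def using assms by (intro exI[of _ k] exI[of _ x] exI[of _ y]) auto

lemma walk_hits_cong: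
  assumes "walk_hits n {(x, y)} V" "(x', y') \<in> P"
    and "x mod int n = x' mod int n \<and> y mod int n = y' mod int n \<or>
         x mod int n = y' mod int n \<and> y mod int n = x' mod int n"
  shows "walk_hits n P V"
proof -
  obtain k where "0 < k" "k < n"
    "V (k - 1) mod int n = x mod int n \<and> V k mod int n = y mod int n \<or>
     V (k - 1) mod int n = y mod int n \<and> V k mod int n = x mod int n"
    using assms(1) unfolding walk_hits_def by blast
  with assms(2,3) show ?thesis
    unfolding walk_hits_def by (intro exI[of _ k] exI[of _ x'] exI[of _ y']) auto
qed

lemma walk_hits_shift: "walk_hits n P (\<lambda>k. V k + int n * q) \<longleftrightarrow> walk_hits n P V"
  unfolding walk_hits_def by simp

lemma walk_hits_reflect:
  assumes "walk_hits n P (\<lambda>k. c - V k)" "c mod int n = c' mod int n"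
    and "\<And>x y. (x, y) \<in> P \<Longrightarrow> (c' - y, c' - x) \<in> Q"
  shows "walk_hits n Q V"
proof -
  have refl: "v mod int n = (c' - x) mod int n" if "(c - v) mod int n = x mod int n" for v x
    using mod_diff_cong[OF assms(2) that] by simp
  from assms(1) obtain k x y where "0 < k" "k < n" "(x, y) \<in> P"
    "(c - V (k - 1)) mod int n = x mod int n \<and> (c - V k) mod int n = y mod int n \<or>
     (c - V (k - 1)) mod int n = y mod int n \<and> (c - V k) mod int n = x mod int n"
    unfolding walk_hits_def by blast
  with assms(3) refl show ?thesis unfolding walk_hits_def by blast
qed


section \<open>Walks avoiding a Class A set\<close>

definition classA_params :: "int \<Rightarrow> nat \<Rightarrow> nat \<Rightarrow> (nat \<Rightarrow> int) \<Rightarrow> (nat \<Rightarrow> int) \<Rightarrow> bool" where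
  "classA_params M \<alpha> \<delta> \<epsilon> \<xi> \<longleftrightarrow> int \<alpha> + int \<delta> \<le> M - 2 \<and>
     (\<forall>i j. 1 \<le> i \<and> i < j \<and> j \<le> \<alpha> \<longrightarrow> \<epsilon> j < \<epsilon> i) \<and>
     (\<forall>i. 1 \<le> i \<and> i \<le> \<alpha> \<longrightarrow> 0 < \<epsilon> i \<and> int \<alpha> - int i + 1 \<le> \<epsilon> i \<and> \<epsilon> i \<le> M - int \<delta> - int i - 1) \<and>
     (\<forall>i j. 1 \<le> i \<and> i < j \<and> j \<le> \<delta> \<longrightarrow> \<xi> j < \<xi> i) \<and>
     (\<forall>j. 1 \<le> j \<and> j \<le> \<delta> \<longrightarrow> 0 < \<xi> j \<and> int \<delta> + 1 - int j \<le> \<xi> j \<and> \<xi> j \<le> M - int j - int \<alpha> - 1) \<and>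
     (0 < \<alpha> \<and> 0 < \<delta> \<longrightarrow> \<epsilon> 1 + \<xi> 1 \<le> M - 2)"

text \<open>The edges of Class A as integer pairs, before rotation by \<open>k\<close> and reduction mod \<open>n\<close>.\<close>

definition classA_pairs :: "int \<Rightarrow> nat \<Rightarrow> nat \<Rightarrow> (nat \<Rightarrow> int) \<Rightarrow> (nat \<Rightarrow> int) \<Rightarrow> (int \<times> int) set" where
  "classA_pairs M \<alpha> \<delta> \<epsilon> \<xi> = {(i, i + 1) | i. int \<alpha> \<le> i \<and> i < M - int \<delta>}
     \<union> {(int i - 1 - \<epsilon> i, int i + \<epsilon> i) | i. 1 \<le> i \<and> i \<le> \<alpha>}
     \<union> {(M - int j - \<xi> j, M - int j + 1 + \<xi> j) | j. 1 \<le> j \<and> j \<le> \<delta>}"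

lemma classA_paramsD:
  assumes "classA_params M \<alpha> \<delta> \<epsilon> \<xi>"
  shows "int \<alpha> + int \<delta> \<le> M - 2"
    and "\<And>i j. 1 \<le> i \<Longrightarrow> i < j \<Longrightarrow> j \<le> \<alpha> \<Longrightarrow> \<epsilon> j < \<epsilon> i"
    and "\<And>i. 1 \<le> i \<Longrightarrow> i \<le> \<alpha> \<Longrightarrow> 0 < \<epsilon> i \<and> int \<alpha> - int i + 1 \<le> \<epsilon> i \<and> \<epsilon> i \<le> M - int \<delta> - int i - 1"
    and "\<And>i j. 1 \<le> i \<Longrightarrow> i < j \<Longrightarrow> j \<le> \<delta> \<Longrightarrow> \<xi> j < \<xi> i"
    and "\<And>j. 1 \<le> j \<Longrightarrow> j \<le> \<delta> \<Longrightarrow> 0 < \<xi> j \<and> int \<delta> + 1 - int j \<le> \<xi> j \<and> \<xi> j \<le> M - int j - int \<alpha> - 1"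
    and "0 < \<alpha> \<Longrightarrow> 0 < \<delta> \<Longrightarrow> \<epsilon> 1 + \<xi> 1 \<le> M - 2"
  using assms unfolding classA_params_def by blast+

lemma classA_params_reflect: "classA_params M \<alpha> \<delta> \<epsilon> \<xi> \<Longrightarrow> classA_params M \<delta> \<alpha> \<xi> \<epsilon>"
  unfolding classA_params_def by (auto simp: algebra_simps)

lemma classA_pairsI:
  "int \<alpha> \<le> x \<Longrightarrow> x < M - int \<delta> \<Longrightarrow> (x, x + 1) \<in> classA_pairs M \<alpha> \<delta> \<epsilon> \<xi>"
  "1 \<le> i \<Longrightarrow> i \<le> \<alpha> \<Longrightarrow> (int i - 1 - \<epsilon> i, int i + \<epsilon> i) \<in> classA_pairs M \<alpha> \<delta> \<epsilon> \<xi>"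
  "1 \<le> j \<Longrightarrow> j \<le> \<delta> \<Longrightarrow> (M - int j - \<xi> j, M - int j + 1 + \<xi> j) \<in> classA_pairs M \<alpha> \<delta> \<epsilon> \<xi>"
  unfolding classA_pairs_def by blast+

lemma classA_pairs_reflect:
  assumes "(x, y) \<in> classA_pairs M \<delta> \<alpha> \<xi> \<epsilon>"
  shows "(M - y, M - x) \<in> classA_pairs M \<alpha> \<delta> \<epsilon> \<xi>"
proof -
  from assms consider
      (boundary) i where "x = i" "y = i + 1" "int \<delta> \<le> i" "i < M - int \<alpha>"
    | (left) i where "x = int i - 1 - \<xi> i" "y = int i + \<xi> i" "1 \<le> i" "i \<le> \<delta>"
    | (right) j where "x = M - int j - \<epsilon> j" "y = M - int j + 1 + \<epsilon> j" "1 \<le> j" "j \<le> \<alpha>"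
    unfolding classA_pairs_def by blast
  then show ?thesis
  proof cases
    case (boundary i)
    have "(M - y, M - x) = (M - i - 1, M - i - 1 + 1)" using boundary by simp
    also have "\<dots> \<in> classA_pairs M \<alpha> \<delta> \<epsilon> \<xi>" by (rule classA_pairsI(1)) (use boundary in auto)
    finally show ?thesis .
  next
    case (left i)
    have "(M - y, M - x) = (M - int i - \<xi> i, M - int i + 1 + \<xi> i)" using left by simp
    also have "\<dots> \<in> classA_pairs M \<alpha> \<delta> \<epsilon> \<xi>" by (rule classA_pairsI(3)) (use left in auto)
    finally show ?thesis .
  next
    case (right j)
    have "(M - y, M - x) = (int j - 1 - \<epsilon> j, int j + \<epsilon> j)" using right by simp
    also have "\<dots> \<in> classA_pairs M \<alpha> \<delta> \<epsilon> \<xi>" by (rule classA_pairsI(2)) (use right in auto)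
    finally show ?thesis .
  qed
qed

lemma steep_int_mono:
  fixes T :: "int \<Rightarrow> int"
  assumes steep: "\<And>z. lo \<le> z \<Longrightarrow> z < hi \<Longrightarrow> T z + 2 \<le> T (z + 1)"
    and "lo \<le> y" "y \<le> y'" "y' \<le> hi"
  shows "T y + 2 * (y' - y) \<le> T y'"
  using assms(3,4)
proof (induction y' rule: int_ge_induct)
  case (step z)
  then show ?case using steep[of z] assms(2) by auto
qed simp

text \<open>Read \<open>T y\<close> as the time at which a path first
  reaches the vertex \<open>y\<close>. Since \<open>T y - 2 y\<close> never decreases, the forbidden values at the chord
  endpoints \<open>i + \<epsilon> i\<close> force \<open>T (i + \<epsilon> i) \<ge> 2 \<epsilon> i + 2\<close> by downward induction on \<open>i\<close>, and
  then the forbidden values at \<open>M - j - \<xi> j\<close> force \<open>T (M - j - \<xi> j) \<ge> 2 M - 1 - 2 \<xi> j\<close> by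
  upward induction on \<open>j\<close>.\<close>

lemma steep_sequence_left_bound:
  fixes T :: "int \<Rightarrow> int"
  assumes params: "classA_params M \<alpha> \<delta> \<epsilon> \<xi>"
    and start: "2 \<le> T (int \<alpha> + 1)"
    and steep: "\<And>y. int \<alpha> + 1 \<le> y \<Longrightarrow> y < M - int \<delta> - 1 \<Longrightarrow> T y + 2 \<le> T (y + 1)"
    and left: "\<And>i. 1 \<le> i \<Longrightarrow> i \<le> \<alpha> \<Longrightarrow> T (int i + \<epsilon> i) \<notin> {2 * \<epsilon> i, 2 * \<epsilon> i + 1}"
    and i: "1 \<le> i" "i \<le> \<alpha>"
  shows "2 * \<epsilon> i + 2 \<le> T (int i + \<epsilon> i)"
proof -
  note \<epsilon>_dec = classA_paramsD(2)[OF params] and \<epsilon>_bounds = classA_paramsD(3)[OF params]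
  note mono = steep_int_mono[of "int \<alpha> + 1" "M - int \<delta> - 1" T, OF steep]
  show ?thesis
    using i(2,1)
  proof (induction i rule: inc_induct)
    case base
    have "2 * \<epsilon> \<alpha> \<le> T (int \<alpha> + \<epsilon> \<alpha>)"
      using mono[of "int \<alpha> + 1" "int \<alpha> + \<epsilon> \<alpha>"] start \<epsilon>_bounds[of \<alpha>] base by auto
    then show ?case using left[of \<alpha>] base by auto
  next
    case (step i)
    have "2 * \<epsilon> i \<le> T (int i + \<epsilon> i)"
      using mono[of "int (Suc i) + \<epsilon> (Suc i)" "int i + \<epsilon> i"] step \<epsilon>_dec[of i "Suc i"]
        \<epsilon>_bounds[of i] \<epsilon>_bounds[of "Suc i"] by auto
    then show ?case using left[of i] step by auto
  qed
qed

lemma steep_sequence_right_bound: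
  fixes T :: "int \<Rightarrow> int"
  assumes params: "classA_params M \<alpha> \<delta> \<epsilon> \<xi>"
    and start: "2 \<le> T (int \<alpha> + 1)"
    and steep: "\<And>y. int \<alpha> + 1 \<le> y \<Longrightarrow> y < M - int \<delta> - 1 \<Longrightarrow> T y + 2 \<le> T (y + 1)"
    and left: "\<And>i. 1 \<le> i \<Longrightarrow> i \<le> \<alpha> \<Longrightarrow> T (int i + \<epsilon> i) \<notin> {2 * \<epsilon> i, 2 * \<epsilon> i + 1}"
    and right: "\<And>j. 1 \<le> j \<Longrightarrow> j \<le> \<delta> \<Longrightarrow> T (M - int j - \<xi> j) \<notin> {2 * M - 3 - 2 * \<xi> j, 2 * M - 2 - 2 * \<xi> j}"
    and j: "1 \<le> j" "j \<le> \<delta>"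
  shows "2 * M - 1 - 2 * \<xi> j \<le> T (M - int j - \<xi> j)"
proof -
  note \<epsilon>_bounds = classA_paramsD(3)[OF params] and \<xi>_dec = classA_paramsD(4)[OF params]
    and \<xi>_bounds = classA_paramsD(5)[OF params] and \<epsilon>\<xi> = classA_paramsD(6)[OF params]
  note mono = steep_int_mono[of "int \<alpha> + 1" "M - int \<delta> - 1" T, OF steep]
  show ?thesis
    using j
  proof (induction j rule: dec_induct)
    case base
    have "2 * M - 2 - 2 * \<xi> 1 \<le> T (M - 1 - \<xi> 1)"
    proof (cases "\<alpha> = 0")
      case True
      then show ?thesis using mono[of "int \<alpha> + 1" "M - 1 - \<xi> 1"] start \<xi>_bounds[of 1] base by auto
    next
      case False
      then show ?thesis
        using mono[of "1 + \<epsilon> 1" "M - 1 - \<xi> 1"] steep_sequence_left_bound[OF params start steep left, of 1]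
          \<epsilon>_bounds[of 1] \<xi>_bounds[of 1] \<epsilon>\<xi> base by auto
    qed
    then show ?case using right[of 1] base by auto
  next
    case (step j)
    have "2 * M - 3 - 2 * \<xi> (Suc j) \<le> T (M - int (Suc j) - \<xi> (Suc j))"
      using mono[of "M - int j - \<xi> j" "M - int (Suc j) - \<xi> (Suc j)"] step \<xi>_dec[of j "Suc j"]
        \<xi>_bounds[of j] \<xi>_bounds[of "Suc j"] by auto
    then show ?case using right[of "Suc j"] step by auto
  qed
qed

lemma steep_sequence_end_bound:
  fixes T :: "int \<Rightarrow> int"
  assumes params: "classA_params M \<alpha> \<delta> \<epsilon> \<xi>"
    and start: "2 \<le> T (int \<alpha> + 1)"
    and steep: "\<And>y. int \<alpha> + 1 \<le> y \<Longrightarrow> y < M - int \<delta> - 1 \<Longrightarrow> T y + 2 \<le> T (y + 1)"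
    and left: "\<And>i. 1 \<le> i \<Longrightarrow> i \<le> \<alpha> \<Longrightarrow> T (int i + \<epsilon> i) \<notin> {2 * \<epsilon> i, 2 * \<epsilon> i + 1}"
    and right: "\<And>j. 1 \<le> j \<Longrightarrow> j \<le> \<delta> \<Longrightarrow> T (M - int j - \<xi> j) \<notin> {2 * M - 3 - 2 * \<xi> j, 2 * M - 2 - 2 * \<xi> j}"
  shows "2 * M - 3 \<le> T (M - int \<delta> - 1)"
proof -
  note mono = steep_int_mono[of "int \<alpha> + 1" "M - int \<delta> - 1" T, OF steep]
  note bounds = classA_paramsD(1,3,5)[OF params]
  consider "0 < \<delta>" | "\<delta> = 0" "0 < \<alpha>" | "\<delta> = 0" "\<alpha> = 0" by blast
  then show ?thesis
  proof cases
    case 1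
    then show ?thesis
      using mono[of "M - int \<delta> - \<xi> \<delta>" "M - int \<delta> - 1"] bounds(3)[of \<delta>]
        steep_sequence_right_bound[OF params start steep left right, of \<delta>] by auto
  next
    case 2
    then show ?thesis
      using mono[of "1 + \<epsilon> 1" "M - int \<delta> - 1"] bounds(2)[of 1]
        steep_sequence_left_bound[OF params start steep left, of 1] by auto
  next
    case 3
    then show ?thesis using mono[of "int \<alpha> + 1" "M - int \<delta> - 1"] start bounds(1) by auto
  qed
qed


lemma boundary_step_hits:
  assumes "0 < k" "k < n" "int \<alpha> \<le> i" "i < M - int \<delta>"
    and "V (k - 1) = i + int n * q1 \<and> V k = i + 1 + int n * q2 \<or>
         V (k - 1) = i + 1 + int n * q1 \<and> V k = i + int n * q2"
  shows "walk_hits n (classA_pairs M \<alpha> \<delta> \<epsilon> \<xi>) V"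
  by (rule walk_hitsI[OF assms(1,2) classA_pairsI(1)[OF assms(3,4)] assms(5)])

lemma first_visit:
  assumes walk: "arc_walk n A B D" and "A 0 < y" "y \<le> B (n - 1)"
  defines "t \<equiv> LEAST k. y \<le> B k"
  shows "0 < t \<and> t < n \<and> B t = y \<and> B (t - 1) = y - 1 \<and> D t"
proof -
  have reached: "y \<le> B t" "t \<le> n - 1" unfolding t_def using assms(3) by (auto intro: LeastI Least_le)
  moreover have "t \<noteq> 0"
  proof
    assume "t = 0"
    with reached(1) arc_walk_start[OF walk] assms(2) show False by simp
  qed
  moreover have "\<not> y \<le> B (t - 1)" unfolding t_def by (rule not_less_Least) (use \<open>t \<noteq> 0\<close> t_def in auto)
  ultimately show ?thesis using arc_walk_step[OF walk, of t] by (cases "D t") auto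
qed

text \<open>At its first visit to \<open>y = B t\<close>, a walk that avoids the edges \<open>{y - 1, y}\<close> and \<open>{y, y + 1}\<close>
  must come from the left end \<open>y - t\<close> of its interval and return to the left end next.\<close>

lemma first_visit_arrival:
  assumes walk: "arc_walk n A B D" and "A 0 < y" "y \<le> B (n - 1)"
    and avoid: "\<not> walk_hits n {(y - 1, y)} (walk_vertex A B D)"
  defines "t \<equiv> LEAST k. y \<le> B k"
  shows "2 \<le> t \<and> t < n \<and> B t = y \<and> walk_vertex A B D (t - 1) = y - int t \<and> walk_vertex A B D t = y"
proof -
  let ?V = "walk_vertex A B D"
  have first: "0 < t" "t < n" "B t = y" "B (t - 1) = y - 1" "D t"
    using first_visit[OF walk assms(2,3)] unfolding t_def by blast+
  have Vt: "?V t = y" using first by (simp add: walk_vertex_def)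
  have prev: "2 \<le> t \<and> \<not> D (t - 1)"
  proof (rule ccontr)
    assume "\<not> (2 \<le> t \<and> \<not> D (t - 1))"
    then have "?V (t - 1) = y - 1"
      using first arc_walk_start[OF walk] by (cases "t = 1") (auto simp: walk_vertex_def)
    then have "walk_hits n {(y - 1, y)} ?V"
      using Vt by (intro walk_hitsI[OF first(1,2), of "y - 1" y _ _ 0 0]) auto
    with avoid show False ..
  qed
  moreover have "?V (t - 1) = y - int t"
    using prev arc_walk_step(1)[OF walk first(1,2,5)] arc_walk_width[OF walk first(2)] first(3)
    by (simp add: walk_vertex_def)
  ultimately show ?thesis using first Vt by simp
qed

lemma first_visit_departure:
  assumes walk: "arc_walk n A B D" and arrival: "0 < t" "t < n" "B t = y"
    "walk_vertex A B D (t - 1) = y - int t" "walk_vertex A B D t = y"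
    and avoid: "\<not> walk_hits n {(y, y + 1)} (walk_vertex A B D)"
  shows "t + 1 < n \<and> B (t + 1) = y \<and> walk_vertex A B D (t + 1) = y - int t - 1"
proof -
  let ?V = "walk_vertex A B D"
  have next_in: "t + 1 < n"
  proof (rule ccontr)
    assume "\<not> t + 1 < n"
    then have "?V (t - 1) = y + 1 + int n * (- 1)" using arrival by simp
    then have "walk_hits n {(y, y + 1)} ?V"
      using arrival by (intro walk_hitsI[OF arrival(1,2), of y "y + 1" _ _ "- 1" 0]) auto
    with avoid show False ..
  qed
  have "\<not> D (t + 1)"
  proof
    assume "D (t + 1)"
    then have "?V (t + 1) = y + 1"
      using arc_walk_step(1)[OF walk _ next_in] arrival(3) by (simp add: walk_vertex_def)
    then have "walk_hits n {(y, y + 1)} ?V"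
      using arrival by (intro walk_hitsI[of "t + 1" n, OF _ next_in, of y "y + 1" _ _ 0 0]) auto
    with avoid show False ..
  qed
  then show ?thesis
    using arc_walk_step(2)[OF walk _ next_in] arc_walk_width[OF walk arrival(2)] arrival(3) next_in
    by (auto simp: walk_vertex_def)
qed

lemma first_visit_edges:
  assumes walk: "arc_walk n A B D" and "A 0 < y" "y \<le> B (n - 1)"
    and avoid: "\<not> walk_hits n {(y - 1, y)} (walk_vertex A B D)"
      "\<not> walk_hits n {(y, y + 1)} (walk_vertex A B D)"
  defines "t \<equiv> LEAST k. y \<le> B k"
  shows "2 \<le> t \<and> t + 1 < n \<and> B (t + 1) = y \<and>
    walk_hits n {(y - int t, y)} (walk_vertex A B D) \<and> walk_hits n {(y - int t - 1, y)} (walk_vertex A B D)"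
proof -
  have arrival: "2 \<le> t" "t < n" "B t = y" "walk_vertex A B D (t - 1) = y - int t" "walk_vertex A B D t = y"
    using first_visit_arrival[OF walk assms(2,3) avoid(1)] unfolding t_def by blast+
  then have departure: "t + 1 < n" "B (t + 1) = y" "walk_vertex A B D (t + 1) = y - int t - 1"
    using first_visit_departure[OF walk _ arrival(2-5) avoid(2)] by simp_all
  have "walk_hits n {(y - int t, y)} (walk_vertex A B D)"
    using arrival by (intro walk_hitsI[of t n, of "y - int t" y _ _ 0 0]) auto
  moreover have "walk_hits n {(y - int t - 1, y)} (walk_vertex A B D)"
    using arrival departure by (intro walk_hitsI[of "t + 1" n, of "y - int t - 1" y _ _ 0 0]) auto
  ultimately show ?thesis using arrival departure by simp
qed

lemma walk_hits_by_difference: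
  assumes "walk_hits n {(y - int t, y)} V" "walk_hits n {(y - int t - 1, y)} V"
    and "(y - x) mod int n \<in> {int t, int t + 1}"
  shows "walk_hits n {(x, y)} V"
proof -
  have x_mod: "x mod int n = (y - (y - x) mod int n) mod int n" by (simp add: mod_diff_right_eq)
  from assms(3) consider "(y - x) mod int n = int t" | "(y - x) mod int n = int t + 1" by blast
  then show ?thesis
  proof cases
    case 1
    with x_mod show ?thesis by (intro walk_hits_cong[OF assms(1), of x y]) auto
  next
    case 2
    with x_mod show ?thesis by (intro walk_hits_cong[OF assms(2), of x y]) (auto simp: algebra_simps)
  qed
qed

lemma first_visit_after:
  assumes walk: "arc_walk n A B D" and "s < n" "B s < z" "z \<le> B (n - 1)"
  shows "s < (LEAST k. z \<le> B k)"
proof (rule ccontr)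
  let ?t = "LEAST k. z \<le> B k"
  assume "\<not> s < ?t"
  then have "B ?t \<le> B s" using arc_walk_right_mono[OF walk] assms(2) by simp
  moreover have "z \<le> B ?t" by (rule LeastI[of _ "n - 1"]) (rule assms(4))
  ultimately show False using assms(3) by simp
qed

lemma first_visit_avoiding:
  assumes walk: "arc_walk n A B D" and "A 0 < y" "y \<le> B (n - 1)"
    and avoid: "\<not> walk_hits n P (walk_vertex A B D)"
    and y': "y' mod int n = y mod int n" "(y' - 1, y') \<in> P" "(y', y' + 1) \<in> P"
  defines "t \<equiv> LEAST k. y \<le> B k"
  shows "2 \<le> t \<and> t + 1 < n \<and> B (t + 1) = y \<and>
    (\<forall>x. (x, y') \<in> P \<or> (y', x) \<in> P \<longrightarrow> (y - x) mod int n \<notin> {int t, int t + 1})"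
proof -
  let ?V = "walk_vertex A B D"
  have avoid_pair: "\<not> walk_hits n {(x, y)} ?V" if "(x, y') \<in> P \<or> (y', x) \<in> P" for x
    using that walk_hits_cong[of n x y ?V x y' P] walk_hits_cong[of n x y ?V y' x P] y'(1) avoid by auto
  have "\<not> walk_hits n {(y - 1, y)} ?V" "\<not> walk_hits n {(y, y + 1)} ?V"
    using walk_hits_cong[of n "y - 1" y ?V "y' - 1" y' P] walk_hits_cong[of n y "y + 1" ?V y' "y' + 1" P]
      y' avoid mod_diff_cong[OF y'(1), of 1 1] mod_add_cong[OF y'(1), of 1 1] by auto
  from first_visit_edges[OF walk assms(2,3) this]
  have visit: "2 \<le> t" "t + 1 < n" "B (t + 1) = y"
    "walk_hits n {(y - int t, y)} ?V" "walk_hits n {(y - int t - 1, y)} ?V"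
    unfolding t_def by blast+
  with avoid_pair walk_hits_by_difference[OF visit(4,5)] show ?thesis by blast
qed

lemma classA_chord_lengths:
  assumes params: "classA_params M \<alpha> \<delta> \<epsilon> \<xi>" and n: "int n = 2 * M - 1"
  shows "1 \<le> i \<Longrightarrow> i \<le> \<alpha> \<Longrightarrow> (int n + (int i + \<epsilon> i) - (int i - 1 - \<epsilon> i)) mod int n = 2 * \<epsilon> i + 1"
    and "1 \<le> j \<Longrightarrow> j \<le> \<delta> \<Longrightarrow>
      (int n + (M - int j - \<xi> j) - (M - int j + 1 + \<xi> j)) mod int n = 2 * M - 2 - 2 * \<xi> j"
proof -
  assume i: "1 \<le> i" "i \<le> \<alpha>"
  have "(int n + (int i + \<epsilon> i) - (int i - 1 - \<epsilon> i)) mod int n = (2 * \<epsilon> i + 1 + int n) mod int n"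
    by (simp add: algebra_simps)
  also have "\<dots> = 2 * \<epsilon> i + 1"
    unfolding mod_add_self2 by (rule mod_pos_pos_trivial) (use classA_paramsD(3)[OF params i] i n in auto)
  finally show "(int n + (int i + \<epsilon> i) - (int i - 1 - \<epsilon> i)) mod int n = 2 * \<epsilon> i + 1" .
next
  assume j: "1 \<le> j" "j \<le> \<delta>"
  have "(int n + (M - int j - \<xi> j) - (M - int j + 1 + \<xi> j)) mod int n = (int n - 1 - 2 * \<xi> j) mod int n"
    by (simp add: algebra_simps)
  also have "\<dots> = 2 * M - 2 - 2 * \<xi> j"
    using mod_pos_pos_trivial[of "int n - 1 - 2 * \<xi> j" "int n"] classA_paramsD(5)[OF params j] n by auto
  finally show "(int n + (M - int j - \<xi> j) - (M - int j + 1 + \<xi> j)) mod int n = 2 * M - 2 - 2 * \<xi> j" .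
qed

text \<open>If the walk wraps around far enough to the right, the times of its first visits to
  \<open>n + \<alpha> + 1, \<dots>, n + M - \<delta> - 1\<close> form a sequence as in \<open>steep_sequence_end_bound\<close>,
  so the last of them comes too late to avoid the boundary edge \<open>{M - \<delta> - 1, M - \<delta>}\<close>.\<close>

lemma walk_hits_if_right_end_far:
  assumes params: "classA_params M \<alpha> \<delta> \<epsilon> \<xi>" and n: "int n = 2 * M - 1" and walk: "arc_walk n A B D"
    and start: "A 0 \<le> int n + int \<alpha>" and far: "int n + M - int \<delta> - 1 \<le> B (n - 1)"
  shows "walk_hits n (classA_pairs M \<alpha> \<delta> \<epsilon> \<xi>) (walk_vertex A B D)"
proof (rule ccontr)
  let ?P = "classA_pairs M \<alpha> \<delta> \<epsilon> \<xi>"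
  assume avoid: "\<not> walk_hits n ?P (walk_vertex A B D)"
  note ad = classA_paramsD(1)[OF params]
    and \<epsilon>_bounds = classA_paramsD(3)[OF params] and \<xi>_bounds = classA_paramsD(5)[OF params]
  define t where "t y = (LEAST k. int n + y \<le> B k)" for y
  have visit: "2 \<le> t y \<and> t y + 1 < n \<and> B (t y + 1) = int n + y \<and>
      (\<forall>x. (x, y) \<in> ?P \<or> (y, x) \<in> ?P \<longrightarrow> (int n + y - x) mod int n \<notin> {int (t y), int (t y) + 1})"
    if "int \<alpha> + 1 \<le> y" "y \<le> M - int \<delta> - 1" for y
    unfolding t_def
    by (rule first_visit_avoiding[OF walk _ _ avoid, of "int n + y" y])
      (use that start far classA_pairsI(1)[of \<alpha> "y - 1" M \<delta> \<epsilon> \<xi>] classA_pairsI(1)[of \<alpha> y M \<delta> \<epsilon> \<xi>] in auto)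
  have steep: "int (t y) + 2 \<le> int (t (y + 1))" if "int \<alpha> + 1 \<le> y" "y < M - int \<delta> - 1" for y
    using first_visit_after[OF walk, of "t y + 1" "int n + (y + 1)"] visit[of y] that far
    by (auto simp: t_def)
  have left: "int (t (int i + \<epsilon> i)) \<notin> {2 * \<epsilon> i, 2 * \<epsilon> i + 1}" if "1 \<le> i" "i \<le> \<alpha>" for i
    using visit[of "int i + \<epsilon> i"] classA_chord_lengths(1)[OF params n that] classA_pairsI(2)[OF that, of \<epsilon> M \<delta> \<xi>]
      \<epsilon>_bounds[OF that] by auto
  have right: "int (t (M - int j - \<xi> j)) \<notin> {2 * M - 3 - 2 * \<xi> j, 2 * M - 2 - 2 * \<xi> j}"
    if "1 \<le> j" "j \<le> \<delta>" for j
    using visit[of "M - int j - \<xi> j"] classA_chord_lengths(2)[OF params n that] classA_pairsI(3)[OF that, of M \<xi> \<alpha> \<epsilon>]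
      \<xi>_bounds[OF that] by auto
  have "2 * M - 3 \<le> int (t (M - int \<delta> - 1))"
    by (rule steep_sequence_end_bound[OF params, of "\<lambda>y. int (t y)"])
      (use visit[of "int \<alpha> + 1"] ad steep left right in auto)
  moreover have "(int n + (M - int \<delta> - 1) - (M - int \<delta>)) mod int n = 2 * M - 2"
    using mod_pos_pos_trivial[of "int n - 1" "int n"] n ad by auto
  then have "int (t (M - int \<delta> - 1)) \<le> 2 * M - 4"
    using visit[of "M - int \<delta> - 1"] classA_pairsI(1)[of \<alpha> "M - int \<delta> - 1" M \<delta> \<epsilon> \<xi>] ad n by auto
  ultimately show False by simp
qed


lemma walk_vertex_cases: "walk_vertex A B D k \<in> {A k, B k}"
  unfolding walk_vertex_def by auto

lemma classA_params_size: "classA_params M \<alpha> \<delta> \<epsilon> \<xi> \<Longrightarrow> int n = 2 * M - 1 \<Longrightarrow> 3 \<le> n"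
  using classA_paramsD(1) by fastforce

lemma walk_hits_if_end_inside:
  assumes params: "classA_params M \<alpha> \<delta> \<epsilon> \<xi>" and n: "int n = 2 * M - 1" and walk: "arc_walk n A B D"
    and inside: "int \<alpha> + 2 \<le> A (n - 1)" "A (n - 1) \<le> M - int \<delta> - 1"
  shows "walk_hits n (classA_pairs M \<alpha> \<delta> \<epsilon> \<xi>) (walk_vertex A B D)"
proof -
  let ?V = "walk_vertex A B D" and ?a = "A (n - 1)"
  have n3: "3 \<le> n" by (rule classA_params_size[OF params n])
  have k: "0 < n - 1" "n - 1 < n" and prev: "n - 1 - 1 = n - 2" using n3 by auto
  have width: "B (n - 1) = ?a + int n - 1" using arc_walk_width[OF walk k(2)] n3 by simp
  have last: "?V (n - 2) \<in> {A (n - 2), B (n - 2)}" by (rule walk_vertex_cases)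
  note hit = boundary_step_hits[OF k, of \<alpha> _ M \<delta> ?V, unfolded prev]
  show ?thesis
  proof (cases "D (n - 1)")
    case True
    then have "A (n - 2) = ?a" "B (n - 2) = ?a - 2 + int n" "?V (n - 1) = ?a - 1 + int n"
      using arc_walk_step(1)[OF walk k] width prev by (auto simp: walk_vertex_def)
    then show ?thesis
      using last hit[of "?a - 2" 1 1] hit[of "?a - 1" 0 1] inside by auto
  next
    case False
    then have "A (n - 2) = ?a + 1" "B (n - 2) = ?a - 1 + int n" "?V (n - 1) = ?a"
      using arc_walk_step(2)[OF walk k] width prev by (auto simp: walk_vertex_def)
    then show ?thesis
      using last hit[of ?a 0 0] hit[of "?a - 1" 1 0] inside by auto
  qed
qed

lemma walk_hits_if_start_in_window:
  assumes params: "classA_params M \<alpha> \<delta> \<epsilon> \<xi>" and n: "int n = 2 * M - 1" and walk: "arc_walk n A B D"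
    and start: "M - int \<delta> \<le> A 0" "A 0 \<le> int n + int \<alpha>"
  shows "walk_hits n (classA_pairs M \<alpha> \<delta> \<epsilon> \<xi>) (walk_vertex A B D)"
proof -
  have n3: "3 \<le> n" by (rule classA_params_size[OF params n])
  have width: "B (n - 1) - A (n - 1) = int n - 1" using arc_walk_width[OF walk, of "n - 1"] n3 by simp
  consider "int n + M - int \<delta> - 1 \<le> B (n - 1)" | "A (n - 1) \<le> int \<alpha> + 1"
    | "int \<alpha> + 2 \<le> A (n - 1)" "A (n - 1) \<le> M - int \<delta> - 1"
    using width by linarith
  then show ?thesis
  proof cases
    case 1
    then show ?thesis by (rule walk_hits_if_right_end_far[OF params n walk start(2)])
  next
    case 2
    \<comment> \<open>Reflect the walk at \<open>(n + M) / 2\<close>, which swaps the roles of \<open>\<alpha>, \<epsilon>\<close> and \<open>\<delta>, \<xi>\<close>.\<close>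
    let ?c = "int n + M"
    have "walk_hits n (classA_pairs M \<delta> \<alpha> \<xi> \<epsilon>) (walk_vertex (\<lambda>k. ?c - B k) (\<lambda>k. ?c - A k) (\<lambda>k. \<not> D k))"
      by (rule walk_hits_if_right_end_far[OF classA_params_reflect[OF params] n arc_walk_reflect[OF walk]])
        (use start 2 arc_walk_start[OF walk] in auto)
    then have "walk_hits n (classA_pairs M \<delta> \<alpha> \<xi> \<epsilon>) (\<lambda>k. ?c - walk_vertex A B D k)"
      by (simp add: walk_vertex_reflect[of A B ?c D, OF arc_walk_start[OF walk]])
    then show ?thesis by (rule walk_hits_reflect[where c' = M]) (simp_all add: classA_pairs_reflect)
  next
    case 3
    then show ?thesis by (rule walk_hits_if_end_inside[OF params n walk])
  qed
qed

theorem arc_walk_hits_classA_pairs: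
  assumes params: "classA_params M \<alpha> \<delta> \<epsilon> \<xi>" and n: "int n = 2 * M - 1" and walk: "arc_walk n A B D"
  shows "walk_hits n (classA_pairs M \<alpha> \<delta> \<epsilon> \<xi>) (walk_vertex A B D)"
proof -
  let ?V = "walk_vertex A B D"
  have n3: "3 \<le> n" by (rule classA_params_size[OF params n])
  have ad: "int \<alpha> + int \<delta> \<le> M - 2" by (rule classA_paramsD(1)[OF params])
  have shifted: "walk_hits n (classA_pairs M \<alpha> \<delta> \<epsilon> \<xi>) ?V"
    if "M - int \<delta> \<le> A 0 + int n * q" "A 0 + int n * q \<le> int n + int \<alpha>" for q
  proof -
    have "walk_hits n (classA_pairs M \<alpha> \<delta> \<epsilon> \<xi>) (walk_vertex (\<lambda>k. A k + int n * q) (\<lambda>k. B k + int n * q) D)"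
      by (rule walk_hits_if_start_in_window[OF params n arc_walk_shift[OF walk]]) (use that in simp_all)
    then show ?thesis by (simp add: walk_vertex_shift walk_hits_shift)
  qed
  define r where "r = A 0 mod int n"
  define q where "q = A 0 div int n"
  have r: "0 \<le> r" "r < int n" "A 0 = r + int n * q" using n3 by (simp_all add: r_def q_def)
  consider "r \<le> int \<alpha>" | "M - int \<delta> \<le> r" | "int \<alpha> + 1 \<le> r" "r \<le> M - int \<delta> - 1" by linarith
  then show ?thesis
  proof cases
    case 1
    then show ?thesis using shifted[of "1 - q"] r n ad by (simp add: algebra_simps)
  next
    case 2
    then show ?thesis using shifted[of "- q"] r n ad by (simp add: algebra_simps)
  next
    case 3
    have k: "0 < (1::nat)" "1 < n" using n3 by auto
    have "?V 0 = A 0" "?V 1 = A 0 + 1 \<or> ?V 1 = A 0 - 1"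
      using arc_walk_step[OF walk k] arc_walk_start[OF walk] by (auto simp: walk_vertex_def)
    then show ?thesis
      using boundary_step_hits[OF k, of \<alpha> r M \<delta> ?V q q] boundary_step_hits[OF k, of \<alpha> "r - 1" M \<delta> ?V q q] r 3
      by auto
  qed
qed


section \<open>Zigzag paths and the lower bound\<close>

definition zigzag_offset :: "nat \<Rightarrow> int" where
  "zigzag_offset j = (if even j then - int (j div 2) else int (j div 2) + 1)"

text \<open>The simple Hamiltonian path \<open>k, k + 1, k - 1, k + 2, k - 2, \<dots>\<close>.\<close>

definition zigzag :: "nat \<Rightarrow> nat \<Rightarrow> nat list" where
  "zigzag n k = map (\<lambda>j. vert n (int k + zigzag_offset j)) [0..<n]"

lemma zigzag_offset_inj: "zigzag_offset j = zigzag_offset j' \<Longrightarrow> j = j'"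
  unfolding zigzag_offset_def by (auto split: if_splits) presburger+

lemma zigzag_offset_bounds:
  "j < n \<Longrightarrow> - int ((n - 1) div 2) \<le> zigzag_offset j \<and> zigzag_offset j < int n - int ((n - 1) div 2)"
  unfolding zigzag_offset_def by (auto; presburger)

lemma zigzag_offset_step:
  "min (zigzag_offset j) (zigzag_offset (Suc j)) = - int ((j + 1) div 2)"
  "max (zigzag_offset j) (zigzag_offset (Suc j)) = int (j div 2) + 1"
  "zigzag_offset j + zigzag_offset (Suc j) = (if even j then 1 else 0)"
  unfolding zigzag_offset_def by (auto; presburger)+

lemma length_zigzag [simp]: "length (zigzag n k) = n"
  unfolding zigzag_def by simp

lemma nth_zigzag: "j < n \<Longrightarrow> zigzag n k ! j = vert n (int k + zigzag_offset j)"
  unfolding zigzag_def by simp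

lemma zigzag_edge:
  assumes "Suc j < n"
  shows "{zigzag n k ! j, zigzag n k ! Suc j} = {vert n (int k - int ((j + 1) div 2)), vert n (int k + int (j div 2) + 1)}"
proof -
  have "{zigzag n k ! j, zigzag n k ! Suc j} = vert n ` {int k + zigzag_offset j, int k + zigzag_offset (Suc j)}"
    using assms by (simp add: nth_zigzag)
  also have "{int k + zigzag_offset j, int k + zigzag_offset (Suc j)} =
      {int k + min (zigzag_offset j) (zigzag_offset (Suc j)), int k + max (zigzag_offset j) (zigzag_offset (Suc j))}"
    by (auto simp: min_def max_def)
  finally show ?thesis by (simp add: zigzag_offset_step algebra_simps)
qed

lemma zigzag_edges_nested:
  assumes "Suc j < n" "Suc j' < n" "j \<le> j'"
  shows "\<not> crosses {zigzag n k ! j', zigzag n k ! Suc j'} {zigzag n k ! j, zigzag n k ! Suc j}"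
proof -
  have "\<not> crosses {vert n (int k - int ((j' + 1) div 2)), vert n (int k + int (j' div 2) + 1)}
      {vert n (int k - int ((j + 1) div 2)), vert n (int k + int (j div 2) + 1)}"
  proof (rule not_crosses_vert_nested)
    show "int k - int ((j' + 1) div 2) \<le> int k - int ((j + 1) div 2)"
      "int k + int (j div 2) + 1 \<le> int k + int (j' div 2) + 1"
      using assms(3) by (simp_all add: div_le_mono)
    show "int k - int ((j + 1) div 2) < int k + int (j div 2) + 1" by simp
    show "int k + int (j' div 2) + 1 < int k - int ((j' + 1) div 2) + int n"
      using assms(2) by linarith
  qed
  then show ?thesis using zigzag_edge assms by simp
qed

lemma zigzag_is_SHP: "is_SHP n (zigzag n k)"
proof -
  let ?w = "int k - int ((n - 1) div 2)"
  have "distinct (map (vert n) (map (\<lambda>j. int k + zigzag_offset j) [0..<n]))"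
  proof (rule distinct_vert_window[where w = ?w])
    show "distinct (map (\<lambda>j. int k + zigzag_offset j) [0..<n])"
      by (simp add: distinct_map inj_on_def zigzag_offset_inj)
    show "set (map (\<lambda>j. int k + zigzag_offset j) [0..<n]) \<subseteq> {?w..<?w + int n}"
      using zigzag_offset_bounds[of _ n] by force
  qed
  then have distinct: "distinct (zigzag n k)" by (simp add: zigzag_def comp_def)
  have "set (zigzag n k) \<subseteq> {0..<n}" unfolding zigzag_def using vert_less by fastforce
  moreover have "card (set (zigzag n k)) = n" using distinct_card[OF distinct] by simp
  ultimately have set: "set (zigzag n k) = {0..<n}" using card_subset_eq[of "{0..<n}"] by simp
  have "\<not> crosses e f" if ef: "e \<in> path_edges (zigzag n k)" "f \<in> path_edges (zigzag n k)" for e f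
  proof -
    obtain j where "e = {zigzag n k ! j, zigzag n k ! Suc j}" "Suc j < n"
      using ef(1) by (rule path_edgesE) simp
    moreover obtain j' where "f = {zigzag n k ! j', zigzag n k ! Suc j'}" "Suc j' < n"
      using ef(2) by (rule path_edgesE) simp
    ultimately show ?thesis using zigzag_edges_nested crosses_sym by (metis nat_le_linear)
  qed
  with distinct set show ?thesis unfolding is_SHP_def by blast
qed

lemma zigzag_edge_sum:
  assumes "e \<in> path_edges (zigzag n k)"
  shows "int (\<Sum>e) mod int n \<in> {(2 * int k) mod int n, (2 * int k + 1) mod int n}"
proof -
  obtain j where j: "e = {zigzag n k ! j, zigzag n k ! Suc j}" "Suc j < n"
    using assms by (rule path_edgesE) simp
  have "zigzag n k ! j \<noteq> zigzag n k ! Suc j"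
    using SHP_nth_eq_iff[OF zigzag_is_SHP[of n k], of j "Suc j"] j(2) by simp
  then have "int (\<Sum>e) = int (zigzag n k ! j) + int (zigzag n k ! Suc j)" using j(1) by simp
  also have "\<dots> = (int k + zigzag_offset j) mod int n + (int k + zigzag_offset (Suc j)) mod int n"
    using j(2) by (simp add: nth_zigzag int_vert)
  finally have "int (\<Sum>e) mod int n = (2 * int k + (zigzag_offset j + zigzag_offset (Suc j))) mod int n"
    by (simp add: mod_add_eq algebra_simps)
  then show ?thesis by (simp add: zigzag_offset_step)
qed

lemma double_mod_inj:
  assumes "odd n" "k1 < n" "k2 < n" "(2 * int k1 + c) mod int n = (2 * int k2 + c) mod int n"
  shows "k1 = k2"
proof -
  have "int n dvd 2 * (int k1 - int k2)" using assms(4) by (simp add: mod_eq_dvd_iff algebra_simps)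
  moreover have "coprime (int n) 2" using assms(1) by simp
  ultimately have "int n dvd int k1 - int k2" by (simp only: coprime_dvd_mult_right_iff)
  then have "int k1 mod int n = int k2 mod int n" by (simp add: mod_eq_dvd_iff)
  with assms(2,3) show ?thesis by simp
qed

text \<open>Every edge lies on at most two of the \<open>n\<close> zigzag paths, as the sum of its endpoints
  determines \<open>2 k\<close> or \<open>2 k + 1\<close> modulo the odd number \<open>n\<close>.\<close>

lemma hits_all_SHP_card_ge:
  assumes "odd n" and sub: "B \<subseteq> ck_edges n" and hits: "hits_all_SHP n B"
  shows "n \<le> 2 * card B"
proof -
  have "finite B"
    by (rule finite_subset[OF sub], rule finite_subset[of _ "Pow {0..<n}"]) (auto simp: ck_edges_def)
  have "\<forall>k\<in>{..<n}. \<exists>e. e \<in> B \<and> e \<in> path_edges (zigzag n k)"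
    using hits zigzag_is_SHP unfolding hits_all_SHP_def by blast
  then obtain e where e: "\<And>k. k < n \<Longrightarrow> e k \<in> B \<and> e k \<in> path_edges (zigzag n k)"
    by (metis bchoice lessThan_iff)
  define f where "f k = (e k, int (\<Sum>(e k)) mod int n = (2 * int k) mod int n)" for k
  have "inj_on f {..<n}"
  proof (rule inj_onI)
    fix k1 k2 assume k: "k1 \<in> {..<n}" "k2 \<in> {..<n}" "f k1 = f k2"
    then have same: "e k1 = e k2" and flag: "(int (\<Sum>(e k1)) mod int n = (2 * int k1) mod int n) \<longleftrightarrow>
        (int (\<Sum>(e k1)) mod int n = (2 * int k2) mod int n)" by (auto simp: f_def)
    show "k1 = k2"
    proof (cases "int (\<Sum>(e k1)) mod int n = (2 * int k1) mod int n")
      case True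
      with flag have "(2 * int k1 + 0) mod int n = (2 * int k2 + 0) mod int n" by simp
      then show ?thesis using double_mod_inj[OF \<open>odd n\<close>] k by blast
    next
      case False
      then have "int (\<Sum>(e k1)) mod int n = (2 * int k1 + 1) mod int n"
        using zigzag_edge_sum[of "e k1" n k1] e[of k1] k by auto
      moreover have "int (\<Sum>(e k1)) mod int n = (2 * int k2 + 1) mod int n"
        using False flag zigzag_edge_sum[of "e k2" n k2] e[of k2] k same by auto
      ultimately show ?thesis using double_mod_inj[OF \<open>odd n\<close>] k by (metis lessThan_iff)
    qed
  qed
  moreover have "f ` {..<n} \<subseteq> B \<times> UNIV" using e by (auto simp: f_def)
  then have "card (f ` {..<n}) \<le> card (B \<times> (UNIV :: bool set))"
    by (rule card_mono[rotated]) (simp add: \<open>finite B\<close>)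
  ultimately show ?thesis by (simp add: card_image card_cartesian_product)
qed


section \<open>Class A sets are blockers\<close>

definition classA_edges :: "nat \<Rightarrow> int \<Rightarrow> int \<Rightarrow> nat \<Rightarrow> nat \<Rightarrow> (nat \<Rightarrow> int) \<Rightarrow> (nat \<Rightarrow> int) \<Rightarrow> nat set set" where
  "classA_edges n k M \<alpha> \<delta> \<epsilon> \<xi> = (\<lambda>(x, y). redge n k x y) ` classA_pairs M \<alpha> \<delta> \<epsilon> \<xi>"

lemma classA_edges_eq:
  "classA_edges n k M \<alpha> \<delta> \<epsilon> \<xi> = {redge n k i (i + 1) | i. int \<alpha> \<le> i \<and> i < M - int \<delta>}
     \<union> {redge n k (int i - 1 - \<epsilon> i) (int i + \<epsilon> i) | i. 1 \<le> i \<and> i \<le> \<alpha>}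
     \<union> {redge n k (M - int j - \<xi> j) (M - int j + 1 + \<xi> j) | j. 1 \<le> j \<and> j \<le> \<delta>}"
  unfolding classA_edges_def classA_pairs_def by auto

lemma classA_obtains_params:
  assumes "classA m B"
  obtains k \<alpha> \<delta> \<epsilon> \<xi> where "classA_params (int m) \<alpha> \<delta> \<epsilon> \<xi>" "B = classA_edges (2 * m - 1) k (int m) \<alpha> \<delta> \<epsilon> \<xi>"
  using assms unfolding classA_def classA_params_def classA_edges_eq Let_def by blast

lemma classA_pairs_span:
  assumes "classA_params M \<alpha> \<delta> \<epsilon> \<xi>" "(x, y) \<in> classA_pairs M \<alpha> \<delta> \<epsilon> \<xi>"
  shows "0 < y - x \<and> y - x < 2 * M - 1"
  using assms(2) classA_paramsD(1,3,5)[OF assms(1)] unfolding classA_pairs_def by fastforce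

lemma card_classA_pairs:
  assumes "classA_params M \<alpha> \<delta> \<epsilon> \<xi>"
  shows "finite (classA_pairs M \<alpha> \<delta> \<epsilon> \<xi>) \<and> card (classA_pairs M \<alpha> \<delta> \<epsilon> \<xi>) \<le> nat M"
proof -
  let ?I = "{int \<alpha>..<M - int \<delta>}"
  let ?f = "\<lambda>i. (i, i + 1)" and ?g = "\<lambda>i. (int i - 1 - \<epsilon> i, int i + \<epsilon> i)"
    and ?h = "\<lambda>j. (M - int j - \<xi> j, M - int j + 1 + \<xi> j)"
  have eq: "classA_pairs M \<alpha> \<delta> \<epsilon> \<xi> = ?f ` ?I \<union> ?g ` {1..\<alpha>} \<union> ?h ` {1..\<delta>}"
    unfolding classA_pairs_def by auto
  have "card (?f ` ?I \<union> ?g ` {1..\<alpha>} \<union> ?h ` {1..\<delta>}) \<le> card (?f ` ?I) + card (?g ` {1..\<alpha>}) + card (?h ` {1..\<delta>})"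
    by (meson add_right_mono card_Un_le order_trans)
  also have "\<dots> \<le> card ?I + card {1..\<alpha>} + card {1..\<delta>}"
    by (intro add_mono card_image_le) simp_all
  also have "\<dots> = nat M" using classA_paramsD(1)[OF assms] by simp
  finally show ?thesis unfolding eq by simp
qed

lemma redge_eq_vert: "redge n k x y = {vert n (x + k), vert n (y + k)}"
  unfolding redge_def vert_def by simp

lemma redge_in_ck_edges:
  assumes "0 < y - x" "y - x < int n"
  shows "redge n k x y \<in> ck_edges n"
proof -
  have "vert n (x + k) \<noteq> vert n (y + k)"
  proof
    assume "vert n (x + k) = vert n (y + k)"
    then have "x + k = y + k" by (rule vert_inj_window[where w = "x + k", rotated 4]) (use assms in auto)
    with assms show False by simp
  qed
  moreover have "0 < n" using assms by simp
  then have "vert n (x + k) < n" "vert n (y + k) < n" by (simp_all add: vert_less)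
  ultimately show ?thesis unfolding redge_eq_vert ck_edges_def by blast
qed

lemma classA_edges_subset:
  assumes params: "classA_params M \<alpha> \<delta> \<epsilon> \<xi>" and n: "int n = 2 * M - 1"
  shows "classA_edges n k M \<alpha> \<delta> \<epsilon> \<xi> \<subseteq> ck_edges n"
proof
  fix e assume "e \<in> classA_edges n k M \<alpha> \<delta> \<epsilon> \<xi>"
  then obtain x y where "e = redge n k x y" "(x, y) \<in> classA_pairs M \<alpha> \<delta> \<epsilon> \<xi>"
    unfolding classA_edges_def by auto
  with classA_pairs_span[OF params] n show "e \<in> ck_edges n" by (simp add: redge_in_ck_edges)
qed

lemma classA_edges_meet_SHP:
  assumes params: "classA_params M \<alpha> \<delta> \<epsilon> \<xi>" and n: "int n = 2 * M - 1" and shp: "is_SHP n p"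
  shows "classA_edges n k M \<alpha> \<delta> \<epsilon> \<xi> \<inter> path_edges p \<noteq> {}"
proof -
  obtain A B D where walk: "arc_walk n A B D" and p: "\<And>j. j < n \<Longrightarrow> p ! j = vert n (walk_vertex A B D j)"
    using SHP_arc_walk[OF shp] by blast
  let ?V = "walk_vertex A B D"
  have "walk_hits n (classA_pairs M \<alpha> \<delta> \<epsilon> \<xi>) (walk_vertex (\<lambda>j. A j + - k) (\<lambda>j. B j + - k) D)"
    by (rule arc_walk_hits_classA_pairs[OF params n arc_walk_shift[OF walk]])
  then obtain j x y where j: "0 < j" "j < n" and xy: "(x, y) \<in> classA_pairs M \<alpha> \<delta> \<epsilon> \<xi>"
    and cong: "(?V (j - 1) - k) mod int n = x mod int n \<and> (?V j - k) mod int n = y mod int n \<or>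
      (?V (j - 1) - k) mod int n = y mod int n \<and> (?V j - k) mod int n = x mod int n"
    unfolding walk_hits_def walk_vertex_shift by auto
  have p_shift: "p ! i = vert n (z + k)" if "i < n" "(?V i - k) mod int n = z mod int n" for i z
    using p[OF that(1)] mod_add_cong[OF that(2), of k k] unfolding vert_def by simp
  have "{p ! (j - 1), p ! j} = redge n k x y"
    unfolding redge_eq_vert using cong
  proof
    assume "(?V (j - 1) - k) mod int n = x mod int n \<and> (?V j - k) mod int n = y mod int n"
    with j show "{p ! (j - 1), p ! j} = {vert n (x + k), vert n (y + k)}" by (simp add: p_shift)
  next
    assume "(?V (j - 1) - k) mod int n = y mod int n \<and> (?V j - k) mod int n = x mod int n"
    with j show "{p ! (j - 1), p ! j} = {vert n (x + k), vert n (y + k)}" by (simp add: p_shift insert_commute)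
  qed
  moreover have "{p ! (j - 1), p ! Suc (j - 1)} \<in> path_edges p"
    using j is_SHP_D(2)[OF shp] by (intro path_edgesI) simp
  moreover have "redge n k x y \<in> classA_edges n k M \<alpha> \<delta> \<epsilon> \<xi>"
    using xy unfolding classA_edges_def by force
  ultimately show ?thesis using j by auto
qed

theorem theorem1:
  fixes m :: nat and B :: "nat set set"
  assumes "m \<ge> 2" and "classA m B"
  shows "SHP_blocker (2 * m - 1) B"
proof -
  obtain k \<alpha> \<delta> \<epsilon> \<xi> where params: "classA_params (int m) \<alpha> \<delta> \<epsilon> \<xi>"
    and B: "B = classA_edges (2 * m - 1) k (int m) \<alpha> \<delta> \<epsilon> \<xi>"
    using assms(2) by (rule classA_obtains_params)
  have n: "int (2 * m - 1) = 2 * int m - 1" using assms(1) by simp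
  have "card B \<le> card (classA_pairs (int m) \<alpha> \<delta> \<epsilon> \<xi>)"
    unfolding B classA_edges_def by (rule card_image_le) (use card_classA_pairs[OF params] in blast)
  also have "\<dots> \<le> m" using card_classA_pairs[OF params] by simp
  finally have small: "card B \<le> m" .
  have minimal: "card B \<le> card B'" if "B' \<subseteq> ck_edges (2 * m - 1)" "hits_all_SHP (2 * m - 1) B'" for B'
  proof -
    have "odd (2 * m - 1)" using assms(1) by (cases m) simp_all
    then have "2 * m - 1 \<le> 2 * card B'" by (rule hits_all_SHP_card_ge[OF _ that])
    with small show ?thesis by linarith
  qed
  have "B \<subseteq> ck_edges (2 * m - 1)" using classA_edges_subset[OF params n] B by simp
  moreover have "hits_all_SHP (2 * m - 1) B"
    unfolding hits_all_SHP_def using classA_edges_meet_SHP[OF params n] B by simp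
  ultimately show ?thesis unfolding SHP_blocker_def using minimal by blast
qed

end
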